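(* Let $P$ be the uniform probability measure on $[0,1]$, $Q$ a probability measure on $[0,1]$ with unimodal density $r = dQ/dP$, maximiser $x^*$ and $r_{max}=\sup r<\infty$. Then for any $\gamma\in[0,1]$, the total number of steps $T$ of AS* satisfies $$\mathbb{E}[T] \le 2\alpha\left(\log\frac{1}{w(\gamma)} + 2\log\frac1\gamma\right) + 22, \qquad \alpha = \left(\log\tfrac43\right)^{-1}.$$
   Context: Unimodal: $r$ non-decreasing on $[0,x^*]$, non-increasing on $[x^*,1]$, $r(x^* ) = r_{max}$. $S(\gamma) = \{x\in[0,1] : r(x)\ge\gamma r_{max}\}$ and $w(\gamma) = \inf\{\delta\in[0,1] : \exists z\in[0,1],\ S(\gamma)\subseteq[z,z+\delta]\}$; $\log(1/0)=+\infty$. $\mathrm{TG}(\mu,\kappa)$ is the unit-scale Gumbel with location $\mu$ truncated to $(-\infty,\kappa]$ (density $\propto \exp(-(g-\mu)-e^{-(g-\mu)})$ on $g\le\kappa$). AS*: $B_1=[0,1]$, $G_0=+\infty$; for every $n\ge1$ draw $G_n\sim\mathrm{TG}(\log P(B_n),G_{n-1})$ and independently $X_n\sim P(\cdot\cap B_n)/P(B_n)$; set $L_n=\max_{k\le n}(\log r(X_k)+G_k)$, $U_n=\log r_{max}+G_n$, and $B_{n+1}=[\max(\{0\}\cup\{X_k:k\le n,X_k\le x^*\}),\ \min(\{1\}\cup\{X_k:k\le n,X_k\ge x^*\})]$. The total number of steps is $T=\min\{n\ge1: L_n\ge U_n\}$. *)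

theory Defs
  imports "HOL-Probability.Probability"
begin

definition unifP :: "real measure" where
  "unifP = uniform_measure lborel {0..1}"

text \<open>Quantile function of the truncated Gumbel TG(mu, kappa) (unit scale, location mu,
  truncated to (-infinity, kappa]); kappa = +infinity means no truncation.
  The CDF on g \<le> kappa is exp(exp(mu-kappa) - exp(mu-g)); inverting at level u gives
  g = mu - ln(exp(mu-kappa) - ln u).  Applied to a uniform u in (0,1) it yields a
  TG(mu,kappa) sample.\<close>
definition tg_quantile :: "real \<Rightarrow> ereal \<Rightarrow> real \<Rightarrow> real" where
  "tg_quantile mu kappa u =
     (case kappa of ereal k \<Rightarrow> mu - ln (exp (mu - k) - ln u)
                  | _ \<Rightarrow> mu - ln (- ln u))"

definition logr :: "(real \<Rightarrow> real) \<Rightarrow> real \<Rightarrow> ereal" where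
  "logr r x = (if r x > 0 then ereal (ln (r x)) else - \<infinity>)"

text \<open>State of AS* after n steps: (a, b, G_n, L_n), where B_{n+1} = [a,b].
  Step n+1 uses the independent uniforms omega n = (u, v):
  G_{n+1} = TG-quantile(log P(B_{n+1}), G_n; u), X_{n+1} = a + (b-a) v (uniform on B_{n+1}).
  (The degenerate case b \<le> a has probability zero; there G is set to the truncation point.)\<close>
primrec as_state :: "(real \<Rightarrow> real) \<Rightarrow> real \<Rightarrow> (nat \<Rightarrow> real \<times> real) \<Rightarrow> nat
                     \<Rightarrow> real \<times> real \<times> ereal \<times> ereal" where
  "as_state r xs \<omega> 0 = (0, 1, \<infinity>, - \<infinity>)"
| "as_state r xs \<omega> (Suc n) =
     (let (a, b, g, L) = as_state r xs \<omega> n;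
          (u, v) = \<omega> n;
          G = (if a < b then ereal (tg_quantile (ln (b - a)) g u) else g);
          X = a + (b - a) * v;
          L' = max L (logr r X + G);
          a' = (if X \<le> xs then max a X else a);
          b' = (if X \<ge> xs then min b X else b)
      in (a', b', G, L'))"

definition as_G :: "(real \<Rightarrow> real) \<Rightarrow> real \<Rightarrow> (nat \<Rightarrow> real \<times> real) \<Rightarrow> nat \<Rightarrow> ereal" where
  "as_G r xs \<omega> n = fst (snd (snd (as_state r xs \<omega> n)))"

definition as_L :: "(real \<Rightarrow> real) \<Rightarrow> real \<Rightarrow> (nat \<Rightarrow> real \<times> real) \<Rightarrow> nat \<Rightarrow> ereal" where
  "as_L r xs \<omega> n = snd (snd (snd (as_state r xs \<omega> n)))"

definition as_stop :: "(real \<Rightarrow> real) \<Rightarrow> real \<Rightarrow> real \<Rightarrow> (nat \<Rightarrow> real \<times> real) \<Rightarrow> nat \<Rightarrow> bool" where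
  "as_stop r xs rmax \<omega> n \<longleftrightarrow> as_L r xs \<omega> n \<ge> ereal (ln rmax) + as_G r xs \<omega> n"

definition as_T :: "(real \<Rightarrow> real) \<Rightarrow> real \<Rightarrow> real \<Rightarrow> (nat \<Rightarrow> real \<times> real) \<Rightarrow> ennreal" where
  "as_T r xs rmax \<omega> =
     (if \<exists>n\<ge>1. as_stop r xs rmax \<omega> n
      then of_nat (LEAST n. n \<ge> 1 \<and> as_stop r xs rmax \<omega> n) else \<infinity>)"

definition rand_space :: "(nat \<Rightarrow> real \<times> real) measure" where
  "rand_space = PiM (UNIV :: nat set) (\<lambda>_. unifP \<Otimes>\<^sub>M unifP)"

definition S_level :: "(real \<Rightarrow> real) \<Rightarrow> real \<Rightarrow> real \<Rightarrow> real set" where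
  "S_level r rmax \<gamma> = {x \<in> {0..1}. r x \<ge> \<gamma> * rmax}"

definition w_width :: "(real \<Rightarrow> real) \<Rightarrow> real \<Rightarrow> real \<Rightarrow> real" where
  "w_width r rmax \<gamma> = Inf {\<delta> \<in> {0..1}. \<exists>z \<in> {0..1}. S_level r rmax \<gamma> \<subseteq> {z..z+\<delta>}}"

definition log_inv :: "real \<Rightarrow> ennreal" where
  "log_inv x = (if x = 0 then \<infinity> else ennreal (ln (1 / x)))"

end

theory Submission
  imports Defs
begin

text \<open>Let \<open>E j = -ln u\<^sub>j\<close> be the exponential variables behind the Gumbel draws and
  \<open>D j\<close> the width of the interval after \<open>j\<close> cuts. Inverting the truncated Gumbel quantile
  gives \<open>exp (-G n) = (\<Sum>j<n. E j / D j)\<close>. Each cut keeps the side of a uniform point that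
  contains \<open>x\<^sup>*\<close>, so the expected width shrinks by the factor \<open>3/4\<close> per step; since
  \<open>S(\<gamma>)\<close> stays inside the interval until some sample hits it, no hit happens during the
  first \<open>j\<close> steps with probability at most \<open>min 1 ((3/4)\<^sup>j / w(\<gamma>))\<close>. After a hit
  \<open>X\<^sub>k \<in> S(\<gamma>)\<close> the lower bound satisfies \<open>L n \<ge> log r(X\<^sub>k) + G (k+1)\<close>, so step \<open>n\<close>
  stops the algorithm as soon as \<open>E (n-1) / D (n-1)\<close> exceeds \<open>1/\<gamma>\<close> times the part of the
  sum accumulated up to the hit. As \<open>E (n-1)\<close> is a fresh exponential variable, step \<open>n\<close>
  is reached with probability at most the probability of no hit by step \<open>n - K - 1\<close> plus the
  expected threshold, which is a geometric mixture of no-hit probabilities. Summing over \<open>n\<close>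
  with a burn-in \<open>K\<close> of about \<open>log\<^sub>4\<^sub>/\<^sub>3 (1/w(\<gamma>)) + log\<^sub>4\<^sub>/\<^sub>3 (1/\<gamma>)\<close> steps gives
  the bound.\<close>

lemma prob_space_unifP: "prob_space unifP"
  unfolding unifP_def by (intro prob_space_uniform_measure) auto

lemma sets_unifP [measurable_cong]: "sets unifP = sets borel"
  unfolding unifP_def by simp

lemma space_unifP [simp]: "space unifP = UNIV"
  unfolding unifP_def by simp

lemma nn_integral_unifP:
  assumes [measurable]: "f \<in> borel_measurable borel"
  shows "(\<integral>\<^sup>+x. f x \<partial>unifP) = (\<integral>\<^sup>+x. f x * indicator {0..1} x \<partial>lborel)"
  unfolding unifP_def by (subst nn_integral_uniform_measure) (auto simp: divide_ennreal_def)

lemma prob_space_rand_space: "prob_space rand_space"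
  unfolding rand_space_def by (intro prob_space_PiM prob_space_pair prob_space_unifP)

lemma space_rand_space [simp]: "space rand_space = UNIV"
  unfolding rand_space_def by (simp add: space_PiM space_pair_measure)

section \<open>Resampling one coordinate of an infinite product\<close>

lemma measurable_PiM_fun_upd:
  assumes "f \<in> measurable N (PiM UNIV M)" "g \<in> measurable N (M i)"
  shows "(\<lambda>x. (f x)(i := g x)) \<in> measurable N (PiM UNIV M)"
  using assms by (intro measurable_fun_upd[where J=UNIV]) auto

lemma nn_integral_PiM_resample:
  assumes M: "prob_space M" and f[measurable]: "f \<in> borel_measurable (PiM UNIV (\<lambda>_. M))"
  shows "(\<integral>\<^sup>+w. f w \<partial>PiM UNIV (\<lambda>_. M))
       = (\<integral>\<^sup>+w. (\<integral>\<^sup>+x. f (w(i := x)) \<partial>M) \<partial>PiM UNIV (\<lambda>_. M))"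
proof -
  let ?\<Pi> = "PiM UNIV (\<lambda>_. M)"
  interpret M: prob_space M by (rule M)
  interpret \<Pi>: prob_space ?\<Pi> by (intro prob_space_PiM M)
  interpret pair_sigma_finite M ?\<Pi> by unfold_locales
  have upd: "(\<lambda>(x, w). w(i := x)) \<in> measurable (M \<Otimes>\<^sub>M ?\<Pi>) ?\<Pi>"
    using measurable_PiM_fun_upd[of snd "M \<Otimes>\<^sub>M ?\<Pi>" "\<lambda>_. M" fst i]
    by (simp add: case_prod_beta')
  have "(\<integral>\<^sup>+w. f w \<partial>?\<Pi>) = (\<integral>\<^sup>+w. f w \<partial>distr (M \<Otimes>\<^sub>M ?\<Pi>) ?\<Pi> (\<lambda>(x, w). w(i := x)))"
    using distr_pair_PiM_eq_PiM[of UNIV "\<lambda>_. M" i] M by simp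
  also have "\<dots> = (\<integral>\<^sup>+z. f ((\<lambda>(x, w). w(i := x)) z) \<partial>(M \<Otimes>\<^sub>M ?\<Pi>))"
    by (rule nn_integral_distr[OF upd]) simp
  also have "\<dots> = (\<integral>\<^sup>+w. (\<integral>\<^sup>+x. f (w(i := x)) \<partial>M) \<partial>?\<Pi>)"
    using upd by (subst nn_integral_snd[symmetric]) auto
  finally show ?thesis .
qed

lemma nn_integral_PiM_resample_fst:
  assumes M: "prob_space M" and N: "prob_space N"
    and f[measurable]: "f \<in> borel_measurable (PiM UNIV (\<lambda>_. M \<Otimes>\<^sub>M N))"
  shows "(\<integral>\<^sup>+w. f w \<partial>PiM UNIV (\<lambda>_. M \<Otimes>\<^sub>M N))
       = (\<integral>\<^sup>+w. (\<integral>\<^sup>+u. f (w(i := (u, snd (w i)))) \<partial>M) \<partial>PiM UNIV (\<lambda>_. M \<Otimes>\<^sub>M N))"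
proof -
  let ?MN = "M \<Otimes>\<^sub>M N"
  let ?\<Pi> = "PiM UNIV (\<lambda>_. ?MN)"
  interpret M: prob_space M by (rule M)
  interpret N: prob_space N by (rule N)
  interpret MN: pair_prob_space M N by unfold_locales
  have MN: "prob_space ?MN" by (intro prob_space_pair M N)
  have g[measurable]: "(\<lambda>w. \<integral>\<^sup>+u. f (w(i := (u, snd (w i)))) \<partial>M) \<in> borel_measurable ?\<Pi>"
  proof (rule M.borel_measurable_nn_integral)
    have "(\<lambda>z. (fst z)(i := (snd z, snd (fst z i)))) \<in> measurable (?\<Pi> \<Otimes>\<^sub>M M) ?\<Pi>"
      by (rule measurable_PiM_fun_upd) auto
    from measurable_compose[OF this f]
    show "case_prod (\<lambda>w u. f (w(i := (u, snd (w i))))) \<in> borel_measurable (?\<Pi> \<Otimes>\<^sub>M M)"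
      by (simp add: case_prod_beta')
  qed
  have inner: "(\<integral>\<^sup>+y. f (w(i := y)) \<partial>?MN) = (\<integral>\<^sup>+y. (\<integral>\<^sup>+u. f (w(i := (u, snd y))) \<partial>M) \<partial>?MN)"
    if "w \<in> space ?\<Pi>" for w
  proof -
    have [measurable]: "(\<lambda>y. f (w(i := y))) \<in> borel_measurable ?MN"
      using measurable_compose[OF measurable_PiM_fun_upd[OF measurable_const[OF that] measurable_id] f] by simp
    have [measurable]: "(\<lambda>y. \<integral>\<^sup>+u. f (w(i := (u, snd y))) \<partial>M) \<in> borel_measurable ?MN"
      by (rule M.borel_measurable_nn_integral) simp
    have "(\<integral>\<^sup>+y. f (w(i := y)) \<partial>?MN) = (\<integral>\<^sup>+v. (\<integral>\<^sup>+u. f (w(i := (u, v))) \<partial>M) \<partial>N)"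
      by (subst MN.nn_integral_snd[symmetric]) simp_all
    also have "\<dots> = (\<integral>\<^sup>+v. (\<integral>\<^sup>+x. (\<integral>\<^sup>+u. f (w(i := (u, v))) \<partial>M) \<partial>M) \<partial>N)"
      by (simp add: M.emeasure_space_1)
    also have "\<dots> = (\<integral>\<^sup>+y. (\<integral>\<^sup>+u. f (w(i := (u, snd y))) \<partial>M) \<partial>?MN)"
      by (subst MN.nn_integral_snd[symmetric]) simp_all
    finally show ?thesis .
  qed
  show ?thesis
    by (simp add: nn_integral_PiM_resample[OF MN f, of i] nn_integral_PiM_resample[OF MN g, of i]
        inner cong: nn_integral_cong)
qed

section \<open>The interval and Gumbel sequences of AS*\<close>

definition cut_interval :: "real \<Rightarrow> real \<times> real \<Rightarrow> real \<Rightarrow> real \<times> real" where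
  "cut_interval xs ab v = (let a = fst ab; b = snd ab; X = a + (b - a) * v in
     (if X \<le> xs then max a X else a, if X \<ge> xs then min b X else b))"

text \<open>\<^term>\<open>as_interval xs w n\<close> is the interval \<open>B\<^sub>n\<^sub>+\<^sub>1\<close> and \<^term>\<open>as_point xs w n\<close> the
  point \<open>X\<^sub>n\<^sub>+\<^sub>1\<close> of AS*; both only depend on the second coordinates of \<^term>\<open>w\<close>.\<close>

primrec as_interval :: "real \<Rightarrow> (nat \<Rightarrow> real \<times> real) \<Rightarrow> nat \<Rightarrow> real \<times> real" where
  "as_interval xs w 0 = (0, 1)"
| "as_interval xs w (Suc n) = cut_interval xs (as_interval xs w n) (snd (w n))"

definition as_width :: "real \<Rightarrow> (nat \<Rightarrow> real \<times> real) \<Rightarrow> nat \<Rightarrow> real" where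
  "as_width xs w n = snd (as_interval xs w n) - fst (as_interval xs w n)"

definition as_point :: "real \<Rightarrow> (nat \<Rightarrow> real \<times> real) \<Rightarrow> nat \<Rightarrow> real" where
  "as_point xs w n = fst (as_interval xs w n) + as_width xs w n * snd (w n)"

definition exp_var :: "(nat \<Rightarrow> real \<times> real) \<Rightarrow> nat \<Rightarrow> real" where
  "exp_var w j = - ln (fst (w j))"

lemma as_width_0 [simp]: "as_width xs w 0 = 1"
  by (simp add: as_width_def)

lemma as_state_Suc:
  "as_state r xs w (Suc n) =
    (let a = fst (as_state r xs w n); b = fst (snd (as_state r xs w n));
         g = fst (snd (snd (as_state r xs w n))); L = snd (snd (snd (as_state r xs w n)));
         G = (if a < b then ereal (tg_quantile (ln (b - a)) g (fst (w n))) else g);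
         X = a + (b - a) * snd (w n)
     in (if X \<le> xs then max a X else a, if X \<ge> xs then min b X else b, G, max L (logr r X + G)))"
  by (cases "as_state r xs w n"; cases "w n") (simp add: Let_def)

declare as_state.simps(2) [simp del]

lemma as_state_interval:
  "fst (as_state r xs w n) = fst (as_interval xs w n)
   \<and> fst (snd (as_state r xs w n)) = snd (as_interval xs w n)"
  by (induction n) (simp_all add: as_state_Suc cut_interval_def Let_def)

lemma as_G_0: "as_G r xs w 0 = \<infinity>"
  by (simp add: as_G_def)

lemma as_G_Suc:
  "as_G r xs w (Suc n) =
    (if as_width xs w n > 0
     then ereal (tg_quantile (ln (as_width xs w n)) (as_G r xs w n) (fst (w n)))
     else as_G r xs w n)"
  using as_state_interval[of r xs w n]
  by (simp add: as_G_def as_state_Suc Let_def as_width_def)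

lemma as_L_Suc:
  "as_L r xs w (Suc n) = max (as_L r xs w n) (logr r (as_point xs w n) + as_G r xs w (Suc n))"
  using as_state_interval[of r xs w n]
  by (simp add: as_L_def as_G_def as_state_Suc Let_def as_width_def as_point_def)

lemma as_L_mono: "m \<le> n \<Longrightarrow> as_L r xs w m \<le> as_L r xs w n"
  by (induction n rule: dec_induct) (auto simp: as_L_Suc le_max_iff_disj)

lemma as_interval_bounds:
  assumes "0 \<le> xs" "xs \<le> 1"
  shows "0 \<le> fst (as_interval xs w n) \<and> fst (as_interval xs w n) \<le> xs
       \<and> xs \<le> snd (as_interval xs w n) \<and> snd (as_interval xs w n) \<le> 1"
  using assms by (induction n) (auto simp: cut_interval_def Let_def)

lemma as_width_nonneg: "0 \<le> xs \<Longrightarrow> xs \<le> 1 \<Longrightarrow> 0 \<le> as_width xs w n"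
  using as_interval_bounds[of xs w n] by (simp add: as_width_def)

definition cut_ratio :: "real \<Rightarrow> real \<Rightarrow> real" where
  "cut_ratio p v = (if v \<le> p then 1 - v else v)"

text \<open>\<open>p\<close> is the relative position of \<open>x\<^sup>*\<close> in the current interval: the new interval
  keeps the part of the old one on the side of \<open>X\<close> containing \<open>x\<^sup>*\<close>.\<close>

lemma as_width_Suc_le:
  assumes "0 \<le> xs" "xs \<le> 1"
  shows "as_width xs w (Suc n)
       \<le> as_width xs w n * cut_ratio ((xs - fst (as_interval xs w n)) / as_width xs w n) (snd (w n))"
proof -
  define a where "a = fst (as_interval xs w n)"
  define b where "b = snd (as_interval xs w n)"
  define v where "v = snd (w n)"
  have ab: "a \<le> xs" "xs \<le> b"
    using as_interval_bounds[OF assms, of w n] by (auto simp: a_def b_def)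
  have D: "as_width xs w n = b - a"
    by (simp add: as_width_def a_def b_def)
  have DS: "as_width xs w (Suc n) =
      (if a + (b - a) * v \<ge> xs then min b (a + (b - a) * v) else b)
    - (if a + (b - a) * v \<le> xs then max a (a + (b - a) * v) else a)"
    by (simp add: as_width_def cut_interval_def Let_def a_def b_def v_def)
  show ?thesis
  proof (cases "a = b")
    case True
    then show ?thesis using DS D ab by (auto simp: cut_ratio_def)
  next
    case False
    then have pos: "b - a > 0" using ab by simp
    have "v \<le> (xs - a) / (b - a) \<longleftrightarrow> a + (b - a) * v \<le> xs"
      using pos by (simp add: pos_le_divide_eq algebra_simps)
    then show ?thesis
      unfolding DS D cut_ratio_def v_def[symmetric] a_def[symmetric]
      using pos ab by (auto simp: algebra_simps)
  qed
qed

lemma tg_quantile_untruncated: "tg_quantile 0 \<infinity> u = - ln (- ln u)"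
  by (simp add: tg_quantile_def)

lemma tg_quantile_truncated:
  assumes "D > 0" "s > 0" "0 < u" "u < 1"
  shows "tg_quantile (ln D) (ereal (- ln s)) u = - ln (s + - ln u / D)"
proof -
  have pos: "D * s - ln u > 0"
    using assms by (smt (verit) ln_less_zero mult_pos_pos)
  have "tg_quantile (ln D) (ereal (- ln s)) u = ln D - ln (D * s - ln u)"
    using assms by (simp add: tg_quantile_def exp_add ln_mult)
  also have "\<dots> = - ln ((D * s - ln u) / D)"
    using assms pos by (simp add: ln_div)
  also have "(D * s - ln u) / D = s + - ln u / D"
    using assms by (simp add: field_simps)
  finally show ?thesis .
qed

definition hits :: "real \<Rightarrow> real set \<Rightarrow> (nat \<Rightarrow> real \<times> real) \<Rightarrow> nat \<Rightarrow> bool" where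
  "hits xs S w m \<longleftrightarrow> (\<exists>k<m. as_point xs w k \<in> S)"

definition pre_hit_sum :: "real \<Rightarrow> real set \<Rightarrow> (nat \<Rightarrow> real \<times> real) \<Rightarrow> nat \<Rightarrow> real" where
  "pre_hit_sum xs S w m = (\<Sum>j<m. if hits xs S w j then 0 else exp_var w j / as_width xs w j)"

lemma S_level_subset_as_interval:
  assumes xs01: "0 \<le> xs" "xs \<le> 1"
    and r_inc: "mono_on {0..xs} r" and r_dec: "antimono_on {xs..1} r"
    and no_hit: "\<not> hits xs (S_level r rmax \<gamma>) w m"
  shows "S_level r rmax \<gamma> \<subseteq> {fst (as_interval xs w m) .. snd (as_interval xs w m)}"
  using no_hit
proof (induction m)
  case 0
  then show ?case by (auto simp: S_level_def)
next
  case (Suc m)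
  let ?S = "S_level r rmax \<gamma>"
  define a where "a = fst (as_interval xs w m)"
  define b where "b = snd (as_interval xs w m)"
  define X where "X = as_point xs w m"
  have IH: "?S \<subseteq> {a..b}" and X_notin: "X \<notin> ?S"
    using Suc by (auto simp: hits_def a_def b_def X_def)
  have step: "as_interval xs w (Suc m) = (if X \<le> xs then max a X else a, if X \<ge> xs then min b X else b)"
    by (simp add: cut_interval_def Let_def X_def as_point_def as_width_def a_def b_def)
  have "X \<le> s \<or> X > xs" "s \<le> X \<or> X < xs" if s: "s \<in> ?S" for s
  proof -
    have s01: "0 \<le> s" "s \<le> 1" and rs: "\<gamma> * rmax \<le> r s" using s by (auto simp: S_level_def)
    show "X \<le> s \<or> X > xs"
    proof (rule ccontr)
      assume "\<not> (X \<le> s \<or> X > xs)"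
      then have "s < X" "X \<le> xs" by auto
      then have "r s \<le> r X" using s01 by (intro mono_onD[OF r_inc]) auto
      then show False using X_notin rs s01 \<open>s < X\<close> \<open>X \<le> xs\<close> xs01 by (auto simp: S_level_def)
    qed
    show "s \<le> X \<or> X < xs"
    proof (rule ccontr)
      assume "\<not> (s \<le> X \<or> X < xs)"
      then have "X < s" "xs \<le> X" by auto
      then have "r s \<le> r X" using s01 xs01 by (intro monotone_onD[OF r_dec]) auto
      then show False using X_notin rs s01 \<open>X < s\<close> \<open>xs \<le> X\<close> xs01 by (auto simp: S_level_def)
    qed
  qed
  then show ?case using IH unfolding step by fastforce
qed

lemma w_width_le_as_width:
  assumes "0 \<le> xs" "xs \<le> 1" "mono_on {0..xs} r" "antimono_on {xs..1} r"
    and "\<not> hits xs (S_level r rmax \<gamma>) w m"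
  shows "w_width r rmax \<gamma> \<le> as_width xs w m"
  unfolding w_width_def
proof (rule cInf_lower)
  show "as_width xs w m \<in> {\<delta> \<in> {0..1}. \<exists>z\<in>{0..1}. S_level r rmax \<gamma> \<subseteq> {z..z + \<delta>}}"
    using S_level_subset_as_interval[OF assms] as_interval_bounds[OF assms(1,2), of w m]
    by (auto simp: as_width_def intro!: bexI[of _ "fst (as_interval xs w m)"])
qed (auto intro: bdd_belowI[of _ 0])

lemma as_stop_if_point_max:
  assumes "r (as_point xs w n) = rmax" "rmax > 0"
  shows "as_stop r xs rmax w (Suc n)"
  using as_L_Suc[of r xs w n] assms by (simp add: as_stop_def logr_def)

lemma as_T_le_suminf:
  fixes f :: "nat \<Rightarrow> ennreal"
  assumes "\<And>n. (\<And>m. 1 \<le> m \<Longrightarrow> m \<le> n \<Longrightarrow> \<not> as_stop r xs rmax w m) \<Longrightarrow> 1 \<le> f n"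
  shows "as_T r xs rmax w \<le> (\<Sum>n. f n)"
proof -
  have N_le: "of_nat N \<le> (\<Sum>n. f n)" if "\<And>n. n < N \<Longrightarrow> 1 \<le> f n" for N
  proof -
    have "of_nat N = (\<Sum>n<N. 1 :: ennreal)" by simp
    also have "\<dots> \<le> (\<Sum>n<N. f n)" by (intro sum_mono that) simp
    also have "\<dots> \<le> (\<Sum>n. f n)" by (intro sum_le_suminf) auto
    finally show ?thesis .
  qed
  show ?thesis
  proof (cases "\<exists>n\<ge>1. as_stop r xs rmax w n")
    case True
    define T where "T = (LEAST n. n \<ge> 1 \<and> as_stop r xs rmax w n)"
    have "1 \<le> f n" if "n < T" for n
    proof (rule assms)
      fix m assume "1 \<le> m" "m \<le> n"
      then show "\<not> as_stop r xs rmax w m"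
        using not_less_Least[of m "\<lambda>n. n \<ge> 1 \<and> as_stop r xs rmax w n"] \<open>n < T\<close>
        unfolding T_def by auto
    qed
    then have "of_nat T \<le> (\<Sum>n. f n)" by (rule N_le)
    then show ?thesis using True by (simp add: as_T_def T_def)
  next
    case False
    have "1 \<le> f n" for n by (rule assms) (use False in auto)
    then have "(SUP N. of_nat N) \<le> (\<Sum>n. f n)"
      by (intro SUP_least N_le)
    then show ?thesis
      by (simp add: ennreal_SUP_of_nat_eq_top top_unique)
  qed
qed

text \<open>For \<open>n \<le> K + 1\<close> the index \<open>n - K - 1\<close> truncates to \<open>0\<close>, where nothing has been
  hit yet, so the first \<open>K + 1\<close> steps are paid for by the first summand.\<close>

definition step_cost :: "real \<Rightarrow> real set \<Rightarrow> real \<Rightarrow> nat \<Rightarrow> nat \<Rightarrow> (nat \<Rightarrow> real \<times> real) \<Rightarrow> ennreal"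
  where "step_cost xs S \<gamma> K n w =
    indicator {w. \<not> hits xs S w (n - K - 1)} w
  + indicator {w. exp_var w (n - 1) < as_width xs w (n - 1) * pre_hit_sum xs S w (n - K - 1) / \<gamma>} w"

context
  fixes xs :: real and w :: "nat \<Rightarrow> real \<times> real"
  assumes xs01: "0 \<le> xs" "xs \<le> 1"
    and u01: "\<And>n. 0 < fst (w n) \<and> fst (w n) < 1"
begin

lemma exp_var_pos: "0 < exp_var w j"
  using u01[of j] by (simp add: exp_var_def)

lemma exp_var_div_width_nonneg: "0 \<le> exp_var w j / as_width xs w j"
  using exp_var_pos[of j] as_width_nonneg[OF xs01] by simp

lemma rate_sum_pos:
  assumes "n \<ge> 1"
  shows "0 < (\<Sum>j<n. exp_var w j / as_width xs w j)"
proof -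
  have "0 < exp_var w 0 / as_width xs w 0" using exp_var_pos by simp
  also have "\<dots> \<le> (\<Sum>j<n. exp_var w j / as_width xs w j)"
    using assms by (intro member_le_sum exp_var_div_width_nonneg) auto
  finally show ?thesis .
qed

text \<open>Division by a zero width gives \<open>0\<close>, which matches the steps in which \<open>G\<close> is not resampled.\<close>

lemma as_G_eq:
  "n \<ge> 1 \<Longrightarrow> as_G r xs w n = ereal (- ln (\<Sum>j<n. exp_var w j / as_width xs w j))"
proof (induction n rule: nat_induct_at_least)
  case base
  show ?case
    by (simp add: as_G_Suc[of r xs w 0, simplified] as_G_0 tg_quantile_untruncated exp_var_def)
next
  case (Suc n)
  show ?case
  proof (cases "as_width xs w n > 0")
    case True
    then show ?thesis
      using Suc rate_sum_pos[OF Suc.hyps] u01[of n]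
      by (simp add: as_G_Suc tg_quantile_truncated exp_var_def)
  next
    case False
    then have "as_width xs w n = 0" using as_width_nonneg[OF xs01, of w n] by simp
    then show ?thesis using Suc by (simp add: as_G_Suc)
  qed
qed

lemma pre_hit_sum_first_hit:
  assumes hit: "as_point xs w k \<in> S" and first: "\<And>k'. k' < k \<Longrightarrow> as_point xs w k' \<notin> S"
    and "k < m"
  shows "pre_hit_sum xs S w m = (\<Sum>j<Suc k. exp_var w j / as_width xs w j)"
proof -
  have hits_iff: "hits xs S w j \<longleftrightarrow> k < j" for j
    using hit first by (auto simp: hits_def) (meson le_less_trans not_less)
  show ?thesis
    unfolding pre_hit_sum_def using \<open>k < m\<close>
    by (intro sum.mono_neutral_cong_right) (auto simp: hits_iff)
qed

lemma as_stop_after_hit: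
  assumes r_xs: "r xs = rmax" and rmax_pos: "rmax > 0" and \<gamma>: "0 < \<gamma>" "\<gamma> \<le> 1"
    and hit: "hits xs (S_level r rmax \<gamma>) w m" and "m \<le> i"
    and large: "as_width xs w i * pre_hit_sum xs (S_level r rmax \<gamma>) w m / \<gamma> \<le> exp_var w i"
  shows "as_stop r xs rmax w (Suc i)"
proof (cases "as_width xs w i = 0")
  case True
  then have "as_point xs w i = xs"
    using as_interval_bounds[OF xs01, of w i] by (simp add: as_point_def as_width_def)
  then show ?thesis using r_xs rmax_pos by (intro as_stop_if_point_max) simp_all
next
  case False
  then have D_pos: "as_width xs w i > 0" using as_width_nonneg[OF xs01, of w i] by simp
  let ?S = "S_level r rmax \<gamma>"
  let ?s = "\<lambda>n. \<Sum>j<n. exp_var w j / as_width xs w j"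
  obtain k0 where k0: "k0 < m" "as_point xs w k0 \<in> ?S"
    using hit by (auto simp: hits_def)
  then obtain k where k: "as_point xs w k \<in> ?S" "\<And>k'. k' < k \<Longrightarrow> as_point xs w k' \<notin> ?S"
    using exists_least_iff[of "\<lambda>k. as_point xs w k \<in> ?S"] by blast
  have "k < m"
    using k0 k(2)[of k0] by (cases "k0 < k") auto
  have rX: "\<gamma> * rmax \<le> r (as_point xs w k)" using k(1) by (simp add: S_level_def)
  then have rX_pos: "0 < r (as_point xs w k)"
    using \<gamma> rmax_pos mult_pos_pos[of \<gamma> rmax] by linarith
  have step_term: "exp_var w i / as_width xs w i \<le> ?s (Suc i)"
    by (rule member_le_sum) (simp_all add: exp_var_div_width_nonneg)
  have "?s (Suc k) \<le> \<gamma> * (exp_var w i / as_width xs w i)"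
    using large D_pos \<gamma> by (simp add: pre_hit_sum_first_hit[OF k \<open>k < m\<close>] field_simps)
  also have "\<dots> \<le> \<gamma> * ?s (Suc i)"
    using \<gamma> by (intro mult_left_mono[OF step_term]) simp
  finally have "ln (?s (Suc k)) \<le> ln (\<gamma> * ?s (Suc i))"
    using rate_sum_pos[of "Suc k"] by simp
  moreover have "ln (\<gamma> * rmax) \<le> ln (r (as_point xs w k))"
    using rX \<gamma> rmax_pos by (intro ln_mono) auto
  ultimately have "ln rmax - ln (?s (Suc i)) \<le> ln (r (as_point xs w k)) - ln (?s (Suc k))"
    using \<gamma> rmax_pos rate_sum_pos[of "Suc i"] by (simp add: ln_mult)
  then have "ereal (ln rmax) + as_G r xs w (Suc i) \<le> logr r (as_point xs w k) + as_G r xs w (Suc k)"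
    using rX_pos by (simp add: as_G_eq logr_def)
  also have "\<dots> \<le> as_L r xs w (Suc k)"
    by (simp add: as_L_Suc)
  also have "\<dots> \<le> as_L r xs w (Suc i)"
    using \<open>k < m\<close> \<open>m \<le> i\<close> by (intro as_L_mono) simp
  finally show ?thesis by (simp add: as_stop_def)
qed
lemma step_cost_ge_1:
  assumes r_xs: "r xs = rmax" and rmax_pos: "rmax > 0" and \<gamma>: "0 < \<gamma>" "\<gamma> \<le> 1"
    and no_stop: "\<And>m. 1 \<le> m \<Longrightarrow> m \<le> n \<Longrightarrow> \<not> as_stop r xs rmax w m"
  shows "1 \<le> step_cost xs (S_level r rmax \<gamma>) \<gamma> K n w"
proof (cases "hits xs (S_level r rmax \<gamma>) w (n - K - 1)")
  case True
  then obtain i where n: "n = Suc i" by (cases n) (auto simp: hits_def)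
  then have "n - K - 1 \<le> i" by simp
  moreover have "\<not> as_stop r xs rmax w (Suc i)" using no_stop[of "Suc i"] n by simp
  ultimately have "exp_var w i < as_width xs w i * pre_hit_sum xs (S_level r rmax \<gamma>) w (n - K - 1) / \<gamma>"
    using as_stop_after_hit[OF r_xs rmax_pos \<gamma> True] not_le by blast
  then show ?thesis using n by (simp add: step_cost_def)
qed (simp add: step_cost_def)

lemma as_T_le_suminf_step_cost:
  assumes "r xs = rmax" "rmax > 0" "0 < \<gamma>" "\<gamma> \<le> 1"
  shows "as_T r xs rmax w \<le> (\<Sum>n. step_cost xs (S_level r rmax \<gamma>) \<gamma> K n w)"
  by (intro as_T_le_suminf step_cost_ge_1[where r=r and rmax=rmax and \<gamma>=\<gamma>, OF assms])

end

lemma measurable_rand_space_coord: "(\<lambda>w. w n) \<in> rand_space \<rightarrow>\<^sub>M unifP \<Otimes>\<^sub>M unifP"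
  unfolding rand_space_def by (rule measurable_component_singleton) simp

lemma measurable_rand_space_fst [measurable]: "(\<lambda>w. fst (w n)) \<in> borel_measurable rand_space"
  using measurable_compose[OF measurable_rand_space_coord measurable_fst]
  by (simp add: measurable_cong_sets[OF refl sets_unifP])

lemma measurable_rand_space_snd [measurable]: "(\<lambda>w. snd (w n)) \<in> borel_measurable rand_space"
  using measurable_compose[OF measurable_rand_space_coord measurable_snd]
  by (simp add: measurable_cong_sets[OF refl sets_unifP])

lemma measurable_as_interval:
  "(\<lambda>w. fst (as_interval xs w n)) \<in> borel_measurable rand_space
   \<and> (\<lambda>w. snd (as_interval xs w n)) \<in> borel_measurable rand_space"
proof (induction n)
  case (Suc n)
  then have [measurable]: "(\<lambda>w. fst (as_interval xs w n)) \<in> borel_measurable rand_space"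
    "(\<lambda>w. snd (as_interval xs w n)) \<in> borel_measurable rand_space" by auto
  show ?case by (simp add: cut_interval_def Let_def) measurable
qed simp

lemmas measurable_as_interval_fst [measurable] = measurable_as_interval[THEN conjunct1]
  and measurable_as_interval_snd [measurable] = measurable_as_interval[THEN conjunct2]

lemma measurable_as_width [measurable]: "(\<lambda>w. as_width xs w n) \<in> borel_measurable rand_space"
  unfolding as_width_def by measurable

lemma measurable_as_point [measurable]: "(\<lambda>w. as_point xs w n) \<in> borel_measurable rand_space"
  unfolding as_point_def by measurable

lemma measurable_exp_var [measurable]: "(\<lambda>w. exp_var w n) \<in> borel_measurable rand_space"
  unfolding exp_var_def by measurable

lemma measurable_hits [measurable]:
  assumes [measurable]: "S \<in> sets borel"
  shows "Measurable.pred rand_space (\<lambda>w. hits xs S w m)"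
  unfolding hits_def by measurable

lemma measurable_pre_hit_sum [measurable]:
  assumes [measurable]: "S \<in> sets borel"
  shows "(\<lambda>w. pre_hit_sum xs S w m) \<in> borel_measurable rand_space"
  unfolding pre_hit_sum_def by measurable

lemma measurable_step_cost [measurable]:
  assumes [measurable]: "S \<in> sets borel"
  shows "step_cost xs S \<gamma> K n \<in> borel_measurable rand_space"
  unfolding step_cost_def by measurable

lemma sets_S_level [measurable]:
  assumes [measurable]: "r \<in> borel_measurable borel"
  shows "S_level r rmax \<gamma> \<in> sets borel"
  unfolding S_level_def by measurable

section \<open>Integrals against the uniform distribution\<close>

lemma nn_integral_FTC_Icc_nonneg:
  fixes f F :: "real \<Rightarrow> real"
  assumes "a \<le> b"
    and "\<And>x. a \<le> x \<Longrightarrow> x \<le> b \<Longrightarrow> DERIV F x :> f x"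
    and "\<And>x. a \<le> x \<Longrightarrow> x \<le> b \<Longrightarrow> isCont f x"
    and "\<And>x. a \<le> x \<Longrightarrow> x \<le> b \<Longrightarrow> 0 \<le> f x"
  shows "(\<integral>\<^sup>+x. ennreal (f x * indicator {a..b} x) \<partial>lborel) = ennreal (F b - F a)"
  using has_bochner_integral_FTC_Icc_real[OF assms(1-3)] assms(4)
  by (subst nn_integral_eq_integral) (auto simp: has_bochner_integral_iff indicator_def)

lemma nn_integral_cut_ratio_le:
  assumes p: "0 \<le> p" "p \<le> 1"
  shows "(\<integral>\<^sup>+v. ennreal (cut_ratio p v) \<partial>unifP) \<le> ennreal (3/4)"
proof -
  have [measurable]: "(\<lambda>v. ennreal (cut_ratio p v)) \<in> borel_measurable borel"
    unfolding cut_ratio_def by measurable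
  have "(\<integral>\<^sup>+v. ennreal (cut_ratio p v) \<partial>unifP) = (\<integral>\<^sup>+v. ennreal (cut_ratio p v) * indicator {0..1} v \<partial>lborel)"
    by (rule nn_integral_unifP) measurable
  also have "\<dots> \<le> (\<integral>\<^sup>+v. ennreal ((1 - v) * indicator {0..p} v) + ennreal (v * indicator {p..1} v) \<partial>lborel)"
    by (intro nn_integral_mono)
       (auto simp: cut_ratio_def indicator_def ennreal_plus[symmetric] simp del: ennreal_plus)
  also have "\<dots> = (\<integral>\<^sup>+v. ennreal ((1 - v) * indicator {0..p} v) \<partial>lborel)
                 + (\<integral>\<^sup>+v. ennreal (v * indicator {p..1} v) \<partial>lborel)"
    by (intro nn_integral_add) auto
  also have "(\<integral>\<^sup>+v. ennreal ((1 - v) * indicator {0..p} v) \<partial>lborel) = ennreal ((p - p^2/2) - (0 - 0^2/2))"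
    using p by (intro nn_integral_FTC_Icc_nonneg) (auto intro!: derivative_eq_intros)
  also have "(\<integral>\<^sup>+v. ennreal (v * indicator {p..1} v) \<partial>lborel) = ennreal (1^2/2 - p^2/2)"
    using p by (intro nn_integral_FTC_Icc_nonneg[where F="\<lambda>v. v^2/2"]) (auto intro!: derivative_eq_intros)
  also have "ennreal ((p - p^2/2) - (0 - 0^2/2)) + ennreal (1^2/2 - p^2/2) = ennreal (1/2 + p - p^2)"
    using p by (subst ennreal_plus[symmetric])
      (auto simp: power2_eq_square intro!: arg_cong[where f=ennreal] mult_left_le mult_le_one mult_left_mono)
  also have "\<dots> \<le> ennreal (3/4)"
    using zero_le_power2[of "p - 1/2"] by (intro ennreal_leI) (simp add: power2_eq_square algebra_simps)
  finally show ?thesis .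
qed

lemma nn_integral_minus_ln_Icc_le:
  assumes e: "0 < e" "e \<le> 1"
  shows "(\<integral>\<^sup>+u. ennreal (- ln u * indicator {e..1} u) \<partial>lborel) \<le> 1"
proof -
  have "(\<integral>\<^sup>+u. ennreal (- ln u * indicator {e..1} u) \<partial>lborel) = ennreal ((1 - 1 * ln 1) - (e - e * ln e))"
    using e by (intro nn_integral_FTC_Icc_nonneg[where F="\<lambda>u. u - u * ln u"])
      (auto intro!: derivative_eq_intros continuous_intros simp: field_simps)
  also have "\<dots> \<le> ennreal 1"
  proof (intro ennreal_leI)
    have "e * ln e \<le> 0" using e by (intro mult_nonneg_nonpos) simp_all
    then show "1 - 1 * ln 1 - (e - e * ln e) \<le> 1" using e by (subst ln_one) linarith
  qed
  finally show ?thesis by simp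
qed

lemma nn_integral_minus_ln_unifP: "(\<integral>\<^sup>+u. ennreal (- ln u) \<partial>unifP) \<le> 1"
proof -
  define f where "f n u = ennreal (- ln u * indicator {1 / real (Suc n)..1} u)" for n and u :: real
  have [measurable]: "f n \<in> borel_measurable lborel" for n
    unfolding f_def by measurable
  have "incseq f"
  proof (intro incseq_SucI le_funI)
    fix n u
    have "1 / real (Suc (Suc n)) \<le> 1 / real (Suc n)" by (simp add: frac_le)
    then show "f n u \<le> f (Suc n) u"
      by (auto simp: f_def indicator_def intro!: ennreal_leI)
  qed
  have below_SUP: "ennreal (- ln u) * indicator {0..1} u \<le> (SUP n. f n u)" for u :: real
  proof (cases "0 < u \<and> u \<le> 1")
    case True
    obtain n where "1 / u < real n"
      using reals_Archimedean2 by blast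
    then have "1 < real (Suc n) * u"
      using True by (simp add: divide_less_eq algebra_simps)
    then have "1 / real (Suc n) \<le> u"
      by (simp add: divide_le_eq mult.commute)
    then have "ennreal (- ln u) * indicator {0..1} u = f n u"
      using True by (simp add: f_def indicator_def)
    then show ?thesis by (metis SUP_upper UNIV_I)
  qed (auto simp: indicator_def)
  have f_le_1: "integral\<^sup>N lborel (f n) \<le> 1" for n
    unfolding f_def by (intro nn_integral_minus_ln_Icc_le) auto
  have "(\<integral>\<^sup>+u. ennreal (- ln u) \<partial>unifP) = (\<integral>\<^sup>+u. ennreal (- ln u) * indicator {0..1} u \<partial>lborel)"
    by (rule nn_integral_unifP) measurable
  also have "\<dots> \<le> (\<integral>\<^sup>+u. (SUP n. f n u) \<partial>lborel)"
    by (intro nn_integral_mono below_SUP)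
  also have "\<dots> = (SUP n. integral\<^sup>N lborel (f n))"
    using nn_integral_monotone_convergence_SUP[OF \<open>incseq f\<close>] by (simp add: SUP_apply[symmetric])
  also have "\<dots> \<le> 1"
    by (intro SUP_least f_le_1)
  finally show ?thesis .
qed

lemma emeasure_minus_ln_unifP_less: "(\<integral>\<^sup>+u. indicator {u. - ln u < c} u \<partial>unifP) \<le> ennreal c"
proof -
  have "(\<integral>\<^sup>+u. indicator {u. - ln u < c} u \<partial>unifP)
      = (\<integral>\<^sup>+u. indicator {u. - ln u < c} u * indicator {0..1} u \<partial>lborel)"
    by (rule nn_integral_unifP) measurable
  also have "\<dots> \<le> ennreal c"
  proof (cases "c > 0")
    case True
    have "(\<integral>\<^sup>+u. indicator {u. - ln u < c} u * indicator {0..1} u \<partial>lborel)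
        \<le> (\<integral>\<^sup>+u. indicator {exp (-c)..1} u \<partial>lborel)"
    proof (intro nn_integral_mono_AE)
      show "AE u in lborel. indicator {u. - ln u < c} u * indicator {0..1} u
                              \<le> (indicator {exp (-c)..1} u :: ennreal)"
        using AE_lborel_singleton[of 0]
      proof eventually_elim
        case (elim u)
        have "exp (-c) \<le> u" if "0 < u" "- ln u < c"
          using that by (metis exp_less_cancel_iff exp_ln less_imp_le minus_less_iff)
        then show ?case using elim by (auto simp: indicator_def)
      qed
    qed
    also have "\<dots> = ennreal (1 - exp (-c))"
      using True by simp
    also have "\<dots> \<le> ennreal c"
      using exp_ge_add_one_self[of "-c"] by (intro ennreal_leI) simp
    finally show ?thesis .
  next
    case False
    have zero: "indicator {u. - ln u < c} u * indicator {0..1} u = (0::ennreal)" for u :: real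
    proof (cases "0 < u \<and> u \<le> 1")
      case True
      then have "ln u \<le> 0" by simp
      then show ?thesis using False by (auto simp: indicator_def)
    qed (use False in \<open>auto simp: indicator_def\<close>)
    show ?thesis by (simp only: zero) simp
  qed
  finally show ?thesis .
qed

section \<open>Expectation estimates by resampling one coordinate\<close>

lemma nn_integral_rand_space_resample:
  assumes "f \<in> borel_measurable rand_space"
  shows "(\<integral>\<^sup>+w. f w \<partial>rand_space) = (\<integral>\<^sup>+w. (\<integral>\<^sup>+y. f (w(i := y)) \<partial>(unifP \<Otimes>\<^sub>M unifP)) \<partial>rand_space)"
  unfolding rand_space_def
  by (intro nn_integral_PiM_resample prob_space_pair prob_space_unifP assms[unfolded rand_space_def])

lemma nn_integral_rand_space_resample_fst:
  assumes "f \<in> borel_measurable rand_space"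
  shows "(\<integral>\<^sup>+w. f w \<partial>rand_space) = (\<integral>\<^sup>+w. (\<integral>\<^sup>+u. f (w(i := (u, snd (w i)))) \<partial>unifP) \<partial>rand_space)"
  unfolding rand_space_def
  by (intro nn_integral_PiM_resample_fst prob_space_unifP assms[unfolded rand_space_def])

lemma measurable_rand_space_fun_upd: "(\<lambda>y. w(i := y)) \<in> unifP \<Otimes>\<^sub>M unifP \<rightarrow>\<^sub>M rand_space"
proof -
  have "w \<in> space rand_space" by simp
  then show ?thesis
    unfolding rand_space_def
    by (intro measurable_PiM_fun_upd measurable_const measurable_ident_sets) simp_all
qed

lemma nn_integral_pair_snd:
  assumes "prob_space M" "sigma_finite_measure N" and [measurable]: "g \<in> borel_measurable N"
  shows "(\<integral>\<^sup>+y. g (snd y) \<partial>(M \<Otimes>\<^sub>M N)) = (\<integral>\<^sup>+v. g v \<partial>N)"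
proof -
  interpret M: prob_space M by fact
  interpret N: sigma_finite_measure N by fact
  interpret pair_sigma_finite M N by unfold_locales
  show ?thesis
    by (subst nn_integral_snd[symmetric]) (simp_all add: M.emeasure_space_1)
qed

lemma as_interval_fun_upd: "n \<le> k \<Longrightarrow> as_interval xs (w(k := y)) n = as_interval xs w n"
  by (induction n) auto

lemma as_interval_fun_upd_fst: "as_interval xs (w(k := (u, snd (w k)))) n = as_interval xs w n"
  by (induction n) auto

lemma as_width_fun_upd: "n \<le> k \<Longrightarrow> as_width xs (w(k := y)) n = as_width xs w n"
  by (simp add: as_width_def as_interval_fun_upd)

lemma as_width_fun_upd_fst: "as_width xs (w(k := (u, snd (w k)))) n = as_width xs w n"
  by (simp add: as_width_def as_interval_fun_upd_fst)

lemma as_point_fun_upd: "n < k \<Longrightarrow> as_point xs (w(k := y)) n = as_point xs w n"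
  by (simp add: as_point_def as_width_fun_upd as_interval_fun_upd)

lemma as_point_fun_upd_fst: "as_point xs (w(k := (u, snd (w k)))) n = as_point xs w n"
  by (simp add: as_point_def as_width_fun_upd_fst as_interval_fun_upd_fst)

lemma hits_fun_upd: "m \<le> k \<Longrightarrow> hits xs S (w(k := y)) m = hits xs S w m"
  unfolding hits_def by (metis as_point_fun_upd less_le_trans)

lemma hits_fun_upd_fst: "hits xs S (w(k := (u, snd (w k)))) m = hits xs S w m"
  by (simp add: hits_def as_point_fun_upd_fst)

lemma pre_hit_sum_fun_upd: "m \<le> k \<Longrightarrow> pre_hit_sum xs S (w(k := y)) m = pre_hit_sum xs S w m"
  unfolding pre_hit_sum_def exp_var_def by (intro sum.cong) (auto simp: hits_fun_upd as_width_fun_upd)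

lemma nn_integral_as_width_Suc_resample_le:
  assumes "0 \<le> xs" "xs \<le> 1"
  shows "(\<integral>\<^sup>+y. ennreal (as_width xs (w(m := y)) (Suc m)) \<partial>(unifP \<Otimes>\<^sub>M unifP))
       \<le> ennreal (3/4) * ennreal (as_width xs w m)"
proof -
  define p where "p = (xs - fst (as_interval xs w m)) / as_width xs w m"
  have p: "0 \<le> p" "p \<le> 1"
    using as_interval_bounds[OF assms, of w m] as_width_nonneg[OF assms, of w m]
    by (auto simp: p_def as_width_def divide_le_eq_1)
  have cut_ratio_measurable [measurable]: "(\<lambda>v. ennreal (cut_ratio p v)) \<in> borel_measurable unifP"
    unfolding cut_ratio_def by measurable
  have "(\<integral>\<^sup>+y. ennreal (as_width xs (w(m := y)) (Suc m)) \<partial>(unifP \<Otimes>\<^sub>M unifP))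
      \<le> (\<integral>\<^sup>+y. ennreal (as_width xs w m) * ennreal (cut_ratio p (snd y)) \<partial>(unifP \<Otimes>\<^sub>M unifP))"
  proof (intro nn_integral_mono)
    fix y
    show "ennreal (as_width xs (w(m := y)) (Suc m)) \<le> ennreal (as_width xs w m) * ennreal (cut_ratio p (snd y))"
      using as_width_Suc_le[OF assms, of "w(m := y)" m] as_width_nonneg[OF assms, of w m]
      by (simp add: as_interval_fun_upd as_width_fun_upd p_def ennreal_mult'[symmetric] ennreal_leI)
  qed
  also have "\<dots> = ennreal (as_width xs w m) * (\<integral>\<^sup>+y. ennreal (cut_ratio p (snd y)) \<partial>(unifP \<Otimes>\<^sub>M unifP))"
    by (rule nn_integral_cmult) measurable
  also have "\<dots> = ennreal (as_width xs w m) * (\<integral>\<^sup>+v. ennreal (cut_ratio p v) \<partial>unifP)"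
    by (simp only: nn_integral_pair_snd[OF prob_space_unifP _ cut_ratio_measurable]
        prob_space_imp_sigma_finite[OF prob_space_unifP])
  also have "\<dots> \<le> ennreal (as_width xs w m) * ennreal (3/4)"
    by (intro mult_left_mono nn_integral_cut_ratio_le p) simp
  finally show ?thesis by (simp add: mult.commute)
qed

lemma nn_integral_mult_as_width_le:
  assumes xs01: "0 \<le> xs" "xs \<le> 1"
    and [measurable]: "F \<in> borel_measurable rand_space"
    and F_indep: "\<And>w k y. j \<le> k \<Longrightarrow> F (w(k := y)) = F w"
    and "j \<le> m"
  shows "(\<integral>\<^sup>+w. F w * ennreal (as_width xs w m) \<partial>rand_space)
       \<le> ennreal (3/4) ^ (m - j) * (\<integral>\<^sup>+w. F w * ennreal (as_width xs w j) \<partial>rand_space)"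
  using \<open>j \<le> m\<close>
proof (induction m rule: dec_induct)
  case (step m)
  have "(\<integral>\<^sup>+w. F w * ennreal (as_width xs w (Suc m)) \<partial>rand_space)
      = (\<integral>\<^sup>+w. (\<integral>\<^sup>+y. F w * ennreal (as_width xs (w(m := y)) (Suc m)) \<partial>(unifP \<Otimes>\<^sub>M unifP)) \<partial>rand_space)"
    using step.hyps by (subst nn_integral_rand_space_resample[where i=m]) (simp_all add: F_indep)
  also have "\<dots> \<le> (\<integral>\<^sup>+w. ennreal (3/4) * (F w * ennreal (as_width xs w m)) \<partial>rand_space)"
  proof (intro nn_integral_mono)
    fix w
    have [measurable]: "(\<lambda>y. as_width xs (w(m := y)) (Suc m)) \<in> borel_measurable (unifP \<Otimes>\<^sub>M unifP)"
      using measurable_compose[OF measurable_rand_space_fun_upd measurable_as_width] .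
    have "(\<integral>\<^sup>+y. F w * ennreal (as_width xs (w(m := y)) (Suc m)) \<partial>(unifP \<Otimes>\<^sub>M unifP))
        = F w * (\<integral>\<^sup>+y. ennreal (as_width xs (w(m := y)) (Suc m)) \<partial>(unifP \<Otimes>\<^sub>M unifP))"
      by (rule nn_integral_cmult) measurable
    also have "\<dots> \<le> F w * (ennreal (3/4) * ennreal (as_width xs w m))"
      by (intro mult_left_mono nn_integral_as_width_Suc_resample_le xs01) simp
    finally show "(\<integral>\<^sup>+y. F w * ennreal (as_width xs (w(m := y)) (Suc m)) \<partial>(unifP \<Otimes>\<^sub>M unifP))
        \<le> ennreal (3/4) * (F w * ennreal (as_width xs w m))"
      by (simp add: ac_simps)
  qed
  also have "\<dots> = ennreal (3/4) * (\<integral>\<^sup>+w. F w * ennreal (as_width xs w m) \<partial>rand_space)"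
    by (rule nn_integral_cmult) measurable
  also have "\<dots> \<le> ennreal (3/4) ^ (Suc m - j) * (\<integral>\<^sup>+w. F w * ennreal (as_width xs w j) \<partial>rand_space)"
    using mult_left_mono[OF step.IH, of "ennreal (3/4)"] step.hyps
    by (simp add: Suc_diff_le mult.assoc)
  finally show ?case .
qed simp

lemma nn_integral_mult_exp_var_le:
  assumes [measurable]: "G \<in> borel_measurable rand_space"
    and G_indep: "\<And>w u. G (w(j := (u, snd (w j)))) = G w"
  shows "(\<integral>\<^sup>+w. G w * ennreal (exp_var w j) \<partial>rand_space) \<le> (\<integral>\<^sup>+w. G w \<partial>rand_space)"
proof -
  have "(\<integral>\<^sup>+w. G w * ennreal (exp_var w j) \<partial>rand_space)
      = (\<integral>\<^sup>+w. G w * (\<integral>\<^sup>+u. ennreal (- ln u) \<partial>unifP) \<partial>rand_space)"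
    by (subst nn_integral_rand_space_resample_fst[where i=j])
       (simp_all add: G_indep exp_var_def nn_integral_cmult)
  also have "\<dots> \<le> (\<integral>\<^sup>+w. G w * 1 \<partial>rand_space)"
    by (intro nn_integral_mono mult_left_mono nn_integral_minus_ln_unifP) simp
  finally show ?thesis by simp
qed

lemma nn_integral_exp_var_less_le:
  assumes [measurable]: "c \<in> borel_measurable rand_space"
    and c_indep: "\<And>w u. c (w(i := (u, snd (w i)))) = c w"
  shows "(\<integral>\<^sup>+w. indicator {w. exp_var w i < c w} w \<partial>rand_space) \<le> (\<integral>\<^sup>+w. ennreal (c w) \<partial>rand_space)"
proof -
  have resample: "indicator {w. exp_var w i < c w} (w(i := (u, snd (w i)))) = indicator {u. - ln u < c w} u"
    for w u by (simp add: c_indep exp_var_def indicator_def)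
  have "(\<integral>\<^sup>+w. indicator {w. exp_var w i < c w} w \<partial>rand_space)
      = (\<integral>\<^sup>+w. (\<integral>\<^sup>+u. indicator {w. exp_var w i < c w} (w(i := (u, snd (w i)))) \<partial>unifP) \<partial>rand_space)"
    by (rule nn_integral_rand_space_resample_fst) measurable
  also have "\<dots> = (\<integral>\<^sup>+w. (\<integral>\<^sup>+u. indicator {u. - ln u < c w} u \<partial>unifP) \<partial>rand_space)"
    by (simp only: resample)
  also have "\<dots> \<le> (\<integral>\<^sup>+w. ennreal (c w) \<partial>rand_space)"
    by (intro nn_integral_mono emeasure_minus_ln_unifP_less)
  finally show ?thesis .
qed

definition miss_prob :: "real \<Rightarrow> real set \<Rightarrow> nat \<Rightarrow> ennreal" where
  "miss_prob xs S j = (\<integral>\<^sup>+w. indicator {w. \<not> hits xs S w j} w \<partial>rand_space)"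

lemma miss_prob_0: "miss_prob xs S 0 = 1"
  using prob_space.emeasure_space_1[OF prob_space_rand_space] by (simp add: miss_prob_def hits_def)

lemma miss_prob_le_1: "miss_prob xs S j \<le> 1"
proof -
  have "miss_prob xs S j \<le> (\<integral>\<^sup>+w. 1 \<partial>rand_space)"
    unfolding miss_prob_def by (intro nn_integral_mono) (simp add: indicator_def)
  then show ?thesis
    using prob_space.emeasure_space_1[OF prob_space_rand_space] by simp
qed

lemma nn_integral_width_ratio_le:
  assumes xs01: "0 \<le> xs" "xs \<le> 1" and [measurable]: "S \<in> sets borel" and "j \<le> n"
  shows "(\<integral>\<^sup>+w. indicator {w. \<not> hits xs S w j} w * ennreal (as_width xs w n / as_width xs w j) \<partial>rand_space)
       \<le> ennreal (3/4) ^ (n - j) * miss_prob xs S j"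
proof -
  define F where "F w = indicator {w. \<not> hits xs S w j} w * ennreal (1 / as_width xs w j)" for w
  have F_meas: "F \<in> borel_measurable rand_space"
    unfolding F_def by measurable
  have F_indep: "F (w(k := y)) = F w" if "j \<le> k" for w k y
    using that by (simp add: F_def hits_fun_upd as_width_fun_upd indicator_def)
  have F_width: "F w * ennreal (as_width xs w j) \<le> indicator {w. \<not> hits xs S w j} w" for w
    using as_width_nonneg[OF xs01, of w j]
    by (cases "as_width xs w j = 0") (simp_all add: F_def indicator_def ennreal_mult[symmetric])
  have "indicator {w. \<not> hits xs S w j} w * ennreal (as_width xs w n / as_width xs w j)
      = F w * ennreal (as_width xs w n)" for w
  proof -
    have "ennreal (as_width xs w n / as_width xs w j) = ennreal (as_width xs w n) * ennreal (1 / as_width xs w j)"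
      using as_width_nonneg[OF xs01, of w j] as_width_nonneg[OF xs01, of w n]
      by (subst ennreal_mult[symmetric]) auto
    then show ?thesis by (simp add: F_def mult_ac)
  qed
  then have "(\<integral>\<^sup>+w. indicator {w. \<not> hits xs S w j} w * ennreal (as_width xs w n / as_width xs w j) \<partial>rand_space)
      = (\<integral>\<^sup>+w. F w * ennreal (as_width xs w n) \<partial>rand_space)"
    by simp
  also have "\<dots> \<le> ennreal (3/4) ^ (n - j) * (\<integral>\<^sup>+w. F w * ennreal (as_width xs w j) \<partial>rand_space)"
    by (rule nn_integral_mult_as_width_le[OF xs01 F_meas F_indep \<open>j \<le> n\<close>])
  also have "\<dots> \<le> ennreal (3/4) ^ (n - j) * miss_prob xs S j"
    unfolding miss_prob_def by (intro mult_left_mono nn_integral_mono F_width) simp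
  finally show ?thesis .
qed

lemma miss_prob_le_geometric:
  assumes xs01: "0 \<le> xs" "xs \<le> 1"
    and r_inc: "mono_on {0..xs} r" and r_dec: "antimono_on {xs..1} r"
    and w_pos: "w_width r rmax \<gamma> > 0"
  shows "miss_prob xs (S_level r rmax \<gamma>) j \<le> ennreal (1 / w_width r rmax \<gamma>) * ennreal (3/4) ^ j"
proof -
  let ?S = "S_level r rmax \<gamma>" and ?W = "w_width r rmax \<gamma>"
  have "miss_prob xs ?S j \<le> (\<integral>\<^sup>+w. ennreal (1 / ?W) * (1 * ennreal (as_width xs w j)) \<partial>rand_space)"
    unfolding miss_prob_def
  proof (intro nn_integral_mono)
    fix w
    show "indicator {w. \<not> hits xs ?S w j} w \<le> ennreal (1 / ?W) * (1 * ennreal (as_width xs w j))"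
    proof (cases "hits xs ?S w j")
      case False
      then have "1 \<le> 1 / ?W * as_width xs w j"
        using w_width_le_as_width[OF xs01 r_inc r_dec False] w_pos by (simp add: field_simps)
      then show ?thesis
        using False w_pos by (simp add: ennreal_mult[symmetric] ennreal_1[symmetric] del: ennreal_1)
    qed simp
  qed
  also have "\<dots> = ennreal (1 / ?W) * (\<integral>\<^sup>+w. 1 * ennreal (as_width xs w j) \<partial>rand_space)"
    by (rule nn_integral_cmult) measurable
  also have "\<dots> \<le> ennreal (1 / ?W) * (ennreal (3/4) ^ (j - 0) * (\<integral>\<^sup>+w. 1 * ennreal (as_width xs w 0) \<partial>rand_space))"
    by (intro mult_left_mono nn_integral_mult_as_width_le[OF xs01]) auto
  also have "\<dots> = ennreal (1 / ?W) * ennreal (3/4) ^ j"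
    using prob_space.emeasure_space_1[OF prob_space_rand_space] by simp
  finally show ?thesis .
qed

lemma ennreal_sum_le: "ennreal (\<Sum>i\<in>A. f i) \<le> (\<Sum>i\<in>A. ennreal (f i))"
proof -
  have "ennreal (\<Sum>i\<in>A. f i) \<le> ennreal (\<Sum>i\<in>A. max 0 (f i))"
    by (intro ennreal_leI sum_mono) simp
  also have "\<dots> = (\<Sum>i\<in>A. ennreal (max 0 (f i)))"
    by (rule sum_ennreal[symmetric]) simp
  also have "\<dots> = (\<Sum>i\<in>A. ennreal (f i))"
    by (simp add: ennreal_max_0)
  finally show ?thesis .
qed

lemma nn_integral_pre_hit_term_le:
  assumes xs01: "0 \<le> xs" "xs \<le> 1" and [measurable]: "S \<in> sets borel" and "j \<le> i" "0 < \<gamma>"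
  shows "(\<integral>\<^sup>+w. ennreal (as_width xs w i * (if hits xs S w j then 0 else exp_var w j / as_width xs w j) / \<gamma>) \<partial>rand_space)
       \<le> ennreal (1 / \<gamma>) * (ennreal (3/4) ^ (i - j) * miss_prob xs S j)"
proof -
  define G where "G w = indicator {w. \<not> hits xs S w j} w * ennreal (as_width xs w i / as_width xs w j / \<gamma>)" for w
  have G_meas: "G \<in> borel_measurable rand_space"
    unfolding G_def by measurable
  have G_indep: "G (w(j := (u, snd (w j)))) = G w" for w u
    by (simp add: G_def hits_fun_upd_fst as_width_fun_upd_fst indicator_def)
  have ratio_nonneg: "0 \<le> as_width xs w i / as_width xs w j / \<gamma>" for w
    using as_width_nonneg[OF xs01] \<open>0 < \<gamma>\<close> by simp
  have "ennreal (as_width xs w i * (if hits xs S w j then 0 else exp_var w j / as_width xs w j) / \<gamma>)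
      = G w * ennreal (exp_var w j)" for w
    using ennreal_mult'[OF ratio_nonneg, of w "exp_var w j"] by (simp add: G_def mult_ac)
  then have "(\<integral>\<^sup>+w. ennreal (as_width xs w i * (if hits xs S w j then 0 else exp_var w j / as_width xs w j) / \<gamma>) \<partial>rand_space)
      = (\<integral>\<^sup>+w. G w * ennreal (exp_var w j) \<partial>rand_space)"
    by simp
  also have "\<dots> \<le> (\<integral>\<^sup>+w. G w \<partial>rand_space)"
    by (rule nn_integral_mult_exp_var_le[OF G_meas G_indep])
  also have "\<dots> = (\<integral>\<^sup>+w. ennreal (1 / \<gamma>) * (indicator {w. \<not> hits xs S w j} w * ennreal (as_width xs w i / as_width xs w j)) \<partial>rand_space)"
  proof (intro nn_integral_cong)
    fix w
    have "ennreal (as_width xs w i / as_width xs w j / \<gamma>) = ennreal (1 / \<gamma>) * ennreal (as_width xs w i / as_width xs w j)"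
      using as_width_nonneg[OF xs01] \<open>0 < \<gamma>\<close> by (subst ennreal_mult[symmetric]) auto
    then show "G w = ennreal (1 / \<gamma>) * (indicator {w. \<not> hits xs S w j} w * ennreal (as_width xs w i / as_width xs w j))"
      by (simp add: G_def mult_ac)
  qed
  also have "\<dots> = ennreal (1 / \<gamma>) * (\<integral>\<^sup>+w. indicator {w. \<not> hits xs S w j} w * ennreal (as_width xs w i / as_width xs w j) \<partial>rand_space)"
    by (rule nn_integral_cmult) measurable
  also have "\<dots> \<le> ennreal (1 / \<gamma>) * (ennreal (3/4) ^ (i - j) * miss_prob xs S j)"
    by (intro mult_left_mono nn_integral_width_ratio_le xs01 \<open>j \<le> i\<close>) simp_all
  finally show ?thesis .
qed

lemma nn_integral_small_exp_var_le:
  assumes xs01: "0 \<le> xs" "xs \<le> 1" and [measurable]: "S \<in> sets borel" and "m \<le> i" "0 < \<gamma>"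
  shows "(\<integral>\<^sup>+w. indicator {w. exp_var w i < as_width xs w i * pre_hit_sum xs S w m / \<gamma>} w \<partial>rand_space)
       \<le> ennreal (1 / \<gamma>) * (\<Sum>j<m. ennreal (3/4) ^ (i - j) * miss_prob xs S j)"
proof -
  define t where "t j w = as_width xs w i * (if hits xs S w j then 0 else exp_var w j / as_width xs w j) / \<gamma>" for j w
  have c_meas: "(\<lambda>w. as_width xs w i * pre_hit_sum xs S w m / \<gamma>) \<in> borel_measurable rand_space"
    by measurable
  have c_indep: "as_width xs (w(i := (u, snd (w i)))) i * pre_hit_sum xs S (w(i := (u, snd (w i)))) m / \<gamma>
      = as_width xs w i * pre_hit_sum xs S w m / \<gamma>" for w u
    using \<open>m \<le> i\<close> by (simp add: as_width_fun_upd_fst pre_hit_sum_fun_upd)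
  have "(\<integral>\<^sup>+w. indicator {w. exp_var w i < as_width xs w i * pre_hit_sum xs S w m / \<gamma>} w \<partial>rand_space)
      \<le> (\<integral>\<^sup>+w. ennreal (as_width xs w i * pre_hit_sum xs S w m / \<gamma>) \<partial>rand_space)"
    by (rule nn_integral_exp_var_less_le[OF c_meas c_indep])
  also have "\<dots> \<le> (\<integral>\<^sup>+w. (\<Sum>j<m. ennreal (t j w)) \<partial>rand_space)"
    using ennreal_sum_le
    by (intro nn_integral_mono) (simp add: t_def pre_hit_sum_def sum_distrib_left sum_divide_distrib)
  also have "\<dots> = (\<Sum>j<m. (\<integral>\<^sup>+w. ennreal (t j w) \<partial>rand_space))"
    unfolding t_def by (rule nn_integral_sum) measurable
  also have "\<dots> \<le> (\<Sum>j<m. ennreal (1 / \<gamma>) * (ennreal (3/4) ^ (i - j) * miss_prob xs S j))"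
    unfolding t_def using \<open>m \<le> i\<close> \<open>0 < \<gamma>\<close>
    by (intro sum_mono nn_integral_pre_hit_term_le xs01) auto
  also have "\<dots> = ennreal (1 / \<gamma>) * (\<Sum>j<m. ennreal (3/4) ^ (i - j) * miss_prob xs S j)"
    by (simp add: sum_distrib_left)
  finally show ?thesis .
qed

lemma nn_integral_step_cost_le:
  assumes "0 \<le> xs" "xs \<le> 1" "S \<in> sets borel" "0 < \<gamma>"
  shows "(\<integral>\<^sup>+w. step_cost xs S \<gamma> K n w \<partial>rand_space)
       \<le> miss_prob xs S (n - K - 1) + ennreal (1 / \<gamma>) * (\<Sum>j<n - K - 1. ennreal (3/4) ^ (n - 1 - j) * miss_prob xs S j)"
proof -
  note [measurable] = \<open>S \<in> sets borel\<close>
  have "(\<integral>\<^sup>+w. step_cost xs S \<gamma> K n w \<partial>rand_space) = miss_prob xs S (n - K - 1)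
      + (\<integral>\<^sup>+w. indicator {w. exp_var w (n - 1) < as_width xs w (n - 1) * pre_hit_sum xs S w (n - K - 1) / \<gamma>} w \<partial>rand_space)"
    unfolding step_cost_def miss_prob_def by (rule nn_integral_add) measurable
  then show ?thesis
    using nn_integral_small_exp_var_le[OF assms(1-3), of "n - K - 1" "n - 1"] assms(4)
    by (simp add: add_left_mono)
qed

section \<open>The expected number of steps\<close>

lemma suminf_swap_ennreal: "(\<Sum>n. \<Sum>j. f n j) = (\<Sum>j. \<Sum>n. f n j :: ennreal)"
proof -
  have "(\<Sum>n. \<Sum>j. f n j) = (\<Sum>n. \<integral>\<^sup>+j. f n j \<partial>count_space UNIV)"
    by (simp add: nn_integral_count_space_nat)
  also have "\<dots> = (\<integral>\<^sup>+j. (\<Sum>n. f n j) \<partial>count_space UNIV)"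
    by (rule nn_integral_suminf[symmetric]) simp
  finally show ?thesis
    by (simp add: nn_integral_count_space_nat)
qed

lemma suminf_ennreal_geometric:
  assumes "0 \<le> q" "q < 1"
  shows "(\<Sum>i. ennreal q ^ i) = ennreal (1 / (1 - q))"
proof -
  have "(\<Sum>i. ennreal q ^ i) = ennreal (\<Sum>i. q ^ i)"
    using assms by (simp add: ennreal_power suminf_ennreal2 summable_geometric)
  then show ?thesis
    using assms by (simp add: suminf_geometric)
qed

lemma suminf_truncated_shift:
  assumes "P 0 = 1"
  shows "(\<Sum>n. P (n - K - 1)) = of_nat (K + 1) + (\<Sum>j. P j :: ennreal)"
proof -
  have "(\<Sum>n. P (n - K - 1)) = (\<Sum>j. P (j + (K + 1) - K - 1)) + (\<Sum>n<K + 1. P (n - K - 1))"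
    by (rule suminf_offset) simp
  also have "(\<Sum>n<K + 1. P (n - K - 1)) = (\<Sum>n<K + 1. 1)"
    using assms by (intro sum.cong) auto
  finally show ?thesis by (simp add: add.commute)
qed

lemma suminf_delayed_geometric:
  assumes "0 \<le> q" "q < 1"
  shows "(\<Sum>n. if j < n - K - 1 then ennreal q ^ (n - 1 - j) else 0) = ennreal q ^ (K + 1) * ennreal (1 / (1 - q))"
proof -
  let ?g = "\<lambda>n. if j < n - K - 1 then ennreal q ^ (n - 1 - j) else 0"
  have "(\<Sum>n. ?g n) = (\<Sum>i. ?g (i + (j + K + 2))) + (\<Sum>n<j + K + 2. ?g n)"
    by (rule suminf_offset) simp
  also have "(\<Sum>n<j + K + 2. ?g n) = 0"
    by (intro sum.neutral) auto
  also have "(\<Sum>i. ?g (i + (j + K + 2))) = (\<Sum>i. ennreal q ^ (K + 1) * ennreal q ^ i)"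
    by (intro suminf_cong) (auto simp: power_add[symmetric] algebra_simps)
  finally show ?thesis
    using assms by (simp add: suminf_ennreal_geometric)
qed

lemma suminf_delayed_geometric_convolution:
  assumes "0 \<le> q" "q < 1"
  shows "(\<Sum>n. \<Sum>j<n - K - 1. ennreal q ^ (n - 1 - j) * P j)
       = ennreal q ^ (K + 1) * ennreal (1 / (1 - q)) * (\<Sum>j. P j)"
proof -
  have "(\<Sum>n. \<Sum>j<n - K - 1. ennreal q ^ (n - 1 - j) * P j)
      = (\<Sum>n. \<Sum>j. (if j < n - K - 1 then ennreal q ^ (n - 1 - j) else 0) * P j)"
    by (intro suminf_cong, subst suminf_finite[where N="{..<_ - K - 1}"]) auto
  also have "\<dots> = (\<Sum>j. \<Sum>n. (if j < n - K - 1 then ennreal q ^ (n - 1 - j) else 0) * P j)"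
    by (rule suminf_swap_ennreal)
  also have "\<dots> = (\<Sum>j. ennreal q ^ (K + 1) * ennreal (1 / (1 - q)) * P j)"
    using assms by (simp only: ennreal_suminf_multc suminf_delayed_geometric)
  finally show ?thesis by simp
qed

lemma AE_u01: "AE w in rand_space. \<forall>n. 0 < fst (w n) \<and> fst (w n) < 1"
proof -
  interpret U: prob_space unifP by (rule prob_space_unifP)
  have "AE u in unifP. 0 < u \<and> u < 1"
    unfolding unifP_def
  proof (rule AE_uniform_measureI)
    show "AE x in lborel. x \<in> {0..1::real} \<longrightarrow> 0 < x \<and> x < 1"
      using AE_lborel_singleton[of 0] AE_lborel_singleton[of 1] by eventually_elim auto
  qed simp
  then have "AE y in unifP \<Otimes>\<^sub>M unifP. 0 < fst y \<and> fst y < 1"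
    by (intro AE_distrD[OF measurable_fst]) (simp only: U.distr_pair_fst)
  then have "AE w in rand_space. 0 < fst (w n) \<and> fst (w n) < 1" for n
    unfolding rand_space_def
    by (intro AE_PiM_component[where P="\<lambda>y. 0 < fst y \<and> fst y < 1"] prob_space_pair prob_space_unifP) simp_all
  then show ?thesis by (simp add: AE_all_countable)
qed

lemma nn_integral_as_T_le:
  assumes xs01: "0 \<le> xs" "xs \<le> 1" and [measurable]: "r \<in> borel_measurable borel"
    and r_xs: "r xs = rmax" and rmax_pos: "rmax > 0" and \<gamma>: "0 < \<gamma>" "\<gamma> \<le> 1"
  shows "(\<integral>\<^sup>+w. as_T r xs rmax w \<partial>rand_space)
       \<le> of_nat (K + 1) + (1 + ennreal (1 / \<gamma>) * ennreal (3/4) ^ (K + 1) * 4)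
                          * (\<Sum>j. miss_prob xs (S_level r rmax \<gamma>) j)"
proof -
  let ?S = "S_level r rmax \<gamma>"
  let ?P = "miss_prob xs ?S"
  have "AE w in rand_space. as_T r xs rmax w \<le> (\<Sum>n. step_cost xs ?S \<gamma> K n w)"
    using AE_u01
    by eventually_elim
       (rule as_T_le_suminf_step_cost[where r=r and rmax=rmax and \<gamma>=\<gamma>, OF xs01 _ r_xs rmax_pos \<gamma>], auto)
  then have "(\<integral>\<^sup>+w. as_T r xs rmax w \<partial>rand_space) \<le> (\<integral>\<^sup>+w. (\<Sum>n. step_cost xs ?S \<gamma> K n w) \<partial>rand_space)"
    by (rule nn_integral_mono_AE)
  also have "\<dots> = (\<Sum>n. \<integral>\<^sup>+w. step_cost xs ?S \<gamma> K n w \<partial>rand_space)"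
    by (rule nn_integral_suminf) measurable
  also have "\<dots> \<le> (\<Sum>n. ?P (n - K - 1) + ennreal (1 / \<gamma>) * (\<Sum>j<n - K - 1. ennreal (3/4) ^ (n - 1 - j) * ?P j))"
    using \<gamma> by (intro suminf_le allI nn_integral_step_cost_le xs01) auto
  also have "\<dots> = (\<Sum>n. ?P (n - K - 1)) + ennreal (1 / \<gamma>) * (\<Sum>n. \<Sum>j<n - K - 1. ennreal (3/4) ^ (n - 1 - j) * ?P j)"
    by (subst suminf_add[symmetric]) auto
  also have "\<dots> = of_nat (K + 1) + (1 + ennreal (1 / \<gamma>) * ennreal (3/4) ^ (K + 1) * 4) * (\<Sum>j. ?P j)"
  proof -
    have "(\<Sum>n. \<Sum>j<n - K - 1. ennreal (3/4) ^ (n - 1 - j) * ?P j) = ennreal (3/4) ^ (K + 1) * 4 * (\<Sum>j. ?P j)"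
      using suminf_delayed_geometric_convolution[where q="3/4" and K=K and P="miss_prob xs (S_level r rmax \<gamma>)"] by simp
    then show ?thesis
      by (simp only: suminf_truncated_shift[where P="miss_prob xs (S_level r rmax \<gamma>)", OF miss_prob_0]) (simp add: distrib_right mult.assoc)
  qed
  finally show ?thesis .
qed

lemma suminf_miss_prob_le:
  assumes xs01: "0 \<le> xs" "xs \<le> 1"
    and r_inc: "mono_on {0..xs} r" and r_dec: "antimono_on {xs..1} r"
    and w_pos: "w_width r rmax \<gamma> > 0" and M: "(3/4) ^ M \<le> w_width r rmax \<gamma>"
  shows "(\<Sum>j. miss_prob xs (S_level r rmax \<gamma>) j) \<le> ennreal (real M + 4)"
proof -
  let ?P = "miss_prob xs (S_level r rmax \<gamma>)" and ?W = "w_width r rmax \<gamma>"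
  have geometric: "(\<Sum>i. ennreal (3/4) ^ i) = 4"
    using suminf_ennreal_geometric[of "3/4"] by simp
  have "?P (i + M) \<le> ennreal ((3/4) ^ M / ?W) * ennreal (3/4) ^ i" for i
  proof -
    have "ennreal (1 / ?W) * ennreal (3/4) ^ (i + M) = ennreal ((3/4) ^ M / ?W) * ennreal (3/4) ^ i"
      using w_pos by (simp add: ennreal_power ennreal_mult'[symmetric] power_add field_simps)
    then show ?thesis using miss_prob_le_geometric[OF xs01 r_inc r_dec w_pos, of "i + M"] by simp
  qed
  then have "(\<Sum>i. ?P (i + M)) \<le> (\<Sum>i. ennreal ((3/4) ^ M / ?W) * ennreal (3/4) ^ i)"
    by (intro suminf_le) auto
  also have "\<dots> = ennreal ((3/4) ^ M / ?W) * 4"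
    by (simp only: ennreal_suminf_cmult geometric)
  also have "\<dots> \<le> 1 * 4"
    using M w_pos by (intro mult_right_mono) simp_all
  finally have tail: "(\<Sum>i. ?P (i + M)) \<le> 4" by simp
  have head: "(\<Sum>j<M. ?P j) \<le> of_nat M"
    using sum_mono[of "{..<M}" ?P "\<lambda>_. 1"] miss_prob_le_1 by simp
  have "(\<Sum>j. ?P j) = (\<Sum>i. ?P (i + M)) + (\<Sum>j<M. ?P j)"
    by (rule suminf_offset) simp
  also have "\<dots> \<le> 4 + of_nat M"
    using tail head by (rule add_mono)
  also have "\<dots> = ennreal (real M + 4)"
    by (subst ennreal_plus) (auto simp: ennreal_of_nat_eq_real_of_nat add.commute)
  finally show ?thesis .
qed

lemma power_nat_ceiling_log_le:
  fixes q x :: real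
  assumes q: "0 < q" "q < 1" and x: "0 < x" "x \<le> 1"
  shows "q ^ nat \<lceil>ln (1 / x) / ln (1 / q)\<rceil> \<le> x"
proof -
  define M where "M = nat \<lceil>ln (1 / x) / ln (1 / q)\<rceil>"
  have "ln (1 / x) / ln (1 / q) \<le> real M"
    unfolding M_def by (rule real_nat_ceiling_ge)
  then have "ln (1 / x) \<le> real M * ln (1 / q)"
    using q by (simp add: divide_le_eq)
  then have "ln (q ^ M) \<le> ln x"
    using q x by (simp add: ln_realpow ln_div)
  then show ?thesis
    using q x unfolding M_def by simp
qed

lemma ln_4_3_ge: "1/4 \<le> ln (4/3::real)"
proof -
  have "ln (3/4::real) \<le> 3/4 - 1" by (rule ln_le_minus_one) simp
  moreover have "ln (3/4::real) = - ln (4/3)" by (simp add: ln_div)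
  ultimately show ?thesis by simp
qed

lemma mult_log_bound_le:
  fixes x :: real
  assumes "0 < x" "x \<le> 1"
  shows "x * (ln (1 / x) / ln (4/3) + 5) \<le> 5"
proof -
  have ln_le: "ln (1 / x) \<le> 1 / x - 1" by (rule ln_le_minus_one) (use assms in simp)
  have ln_nonneg: "0 \<le> ln (1 / x)" using assms by simp
  have "ln (1 / x) * 1 \<le> ln (1 / x) * (4 * ln (4/3))"
    using ln_4_3_ge ln_nonneg by (intro mult_left_mono) auto
  then have "ln (1 / x) / ln (4/3) \<le> 4 * ln (1 / x)"
    by (simp add: divide_le_eq mult_ac)
  then have "x * (ln (1 / x) / ln (4/3) + 5) \<le> x * (4 * (1 / x - 1) + 5)"
    using assms ln_le by (intro mult_left_mono) auto
  also have "\<dots> = 4 + x" using assms by (simp add: field_simps)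
  finally show ?thesis using assms by simp
qed

text \<open>The burn-in \<open>K + 1 = M + N + 3\<close> makes \<open>(3/4)\<^sup>K\<^sup>+\<^sup>1/\<gamma> \<le> (27/64) w(\<gamma>)\<close>, which
  compensates the factor \<open>M + 4\<close> coming from the missed steps.\<close>

lemma expected_steps_arith:
  fixes w \<gamma> :: real
  assumes w: "0 < w" "w \<le> 1" and \<gamma>: "0 < \<gamma>" "\<gamma> \<le> 1"
    and M_def: "M = nat \<lceil>ln (1 / w) / ln (4/3)\<rceil>" and N_def: "N = nat \<lceil>ln (1 / \<gamma>) / ln (4/3)\<rceil>"
    and K_def: "K = M + N + 2"
  shows "real (K + 1) + (1 + 1 / \<gamma> * (3/4) ^ (K + 1) * 4) * (real M + 4)
       \<le> 2 / ln (4/3) * (ln (1 / w) + 2 * ln (1 / \<gamma>)) + 22"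
proof -
  define l L G where "l = ln (4/3::real)" and "L = ln (1 / w)" and "G = ln (1 / \<gamma>)"
  have l: "0 < l" and L: "0 \<le> L" and G: "0 \<le> G"
    using w \<gamma> by (simp_all add: l_def L_def G_def)
  have qM: "(3/4) ^ M \<le> w" and qN: "(3/4) ^ N \<le> \<gamma>"
    using power_nat_ceiling_log_le[of "3/4" w] power_nat_ceiling_log_le[of "3/4" \<gamma>] w \<gamma>
    by (simp_all add: M_def N_def)
  have M: "real M \<le> L / l + 1" and N: "real N \<le> G / l + 1"
    using divide_nonneg_pos[OF L l] divide_nonneg_pos[OF G l]
    unfolding M_def N_def l_def L_def G_def by linarith+
  have "(3/4::real) ^ (K + 1) = (3/4) ^ M * (3/4) ^ N * (27/64)"
    by (simp add: K_def power_add)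
  also have "\<dots> \<le> w * \<gamma> * (27/64)"
    using qM qN w \<gamma> by (intro mult_right_mono mult_mono) auto
  finally have "(3/4::real) ^ (K + 1) \<le> w * \<gamma> * (27/64)" .
  then have "1 / \<gamma> * (3/4) ^ (K + 1) * 4 * (real M + 4) \<le> 1 / \<gamma> * (w * \<gamma> * (27/64)) * 4 * (real M + 4)"
    using \<gamma> by (intro mult_right_mono mult_left_mono) auto
  also have "\<dots> = 27/16 * (w * (real M + 4))"
    using \<gamma> by (simp add: field_simps)
  also have "\<dots> \<le> 27/16 * 5"
    using mult_log_bound_le[OF w] M w by (simp add: L_def l_def) (smt (verit) mult_left_mono)
  finally have late: "1 / \<gamma> * (3/4) ^ (K + 1) * 4 * (real M + 4) \<le> 135/16" by simp
  have "(1 + 1 / \<gamma> * (3/4) ^ (K + 1) * 4) * (real M + 4)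
      = real M + 4 + 1 / \<gamma> * (3/4) ^ (K + 1) * 4 * (real M + 4)"
    by (simp add: algebra_simps)
  moreover have "2 / ln (4/3) * (ln (1 / w) + 2 * ln (1 / \<gamma>)) = 2 * (L / l) + 4 * (G / l)"
    using l unfolding l_def L_def G_def by (simp add: field_simps)
  moreover have "real (K + 1) = real M + real N + 3"
    by (simp add: K_def)
  ultimately show ?thesis
    using late M N divide_nonneg_pos[OF G l] by linarith
qed

lemma w_width_bounds: "0 \<le> w_width r rmax \<gamma> \<and> w_width r rmax \<gamma> \<le> 1"
proof -
  have "1 \<in> {\<delta> \<in> {0..1}. \<exists>z\<in>{0..1}. S_level r rmax \<gamma> \<subseteq> {z..z + \<delta>}}"
    by (auto simp: S_level_def intro!: bexI[of _ 0])
  then show ?thesis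
    unfolding w_width_def by (auto intro!: cInf_greatest cInf_lower bdd_belowI[of _ 0])
qed

lemma density_bound_pos:
  assumes [measurable]: "r \<in> borel_measurable borel"
    and prob: "prob_space (density unifP (\<lambda>x. ennreal (r x)))"
    and le: "\<And>x. x \<in> {0..1} \<Longrightarrow> r x \<le> rmax"
  shows "0 < rmax"
proof (rule ccontr)
  assume "\<not> 0 < rmax"
  then have zero: "ennreal (r x) * indicator {0..1} x = 0" for x
    using le[of x] by (auto simp: indicator_def ennreal_eq_0_iff)
  have "emeasure (density unifP (\<lambda>x. ennreal (r x))) UNIV = (\<integral>\<^sup>+x. ennreal (r x) \<partial>unifP)"
    by (subst emeasure_density) (auto simp: sets_unifP)
  also have "\<dots> = (\<integral>\<^sup>+x. ennreal (r x) * indicator {0..1} x \<partial>lborel)"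
    by (rule nn_integral_unifP) measurable
  also have "\<dots> = 0"
    by (simp only: zero) simp
  finally show False
    using prob_space.emeasure_space_1[OF prob] by simp
qed

lemma log_inv_bound_eq:
  assumes "0 < x" "x \<le> 1" "0 < y" "y \<le> 1"
  shows "ennreal (2 / ln (4/3)) * (log_inv x + 2 * log_inv y) + 22
       = ennreal (2 / ln (4/3) * (ln (1 / x) + 2 * ln (1 / y)) + 22)"
proof -
  define a b where "a = ln (1 / x)" and "b = ln (1 / y)"
  have ab: "0 \<le> a" "0 \<le> b" and l: "0 < ln (4/3::real)"
    using assms by (simp_all add: a_def b_def)
  have log_inv: "log_inv x = ennreal a" "log_inv y = ennreal b"
    using assms by (simp_all add: log_inv_def a_def b_def)
  have sum: "ennreal (a + 2 * b) = ennreal a + 2 * ennreal b"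
    using ab by (simp add: ennreal_mult)
  have prod: "ennreal (2 / ln (4/3) * (a + 2 * b)) = ennreal (2 / ln (4/3)) * ennreal (a + 2 * b)"
    using ab l by (intro ennreal_mult) simp_all
  have "ennreal (2 / ln (4/3) * (a + 2 * b) + 22) = ennreal (2 / ln (4/3) * (a + 2 * b)) + 22"
    using ab l by (subst ennreal_plus) simp_all
  then show ?thesis
    by (simp only: log_inv sum prod a_def[symmetric] b_def[symmetric])
qed

lemma ennreal_expected_steps_bound_eq:
  assumes \<gamma>: "0 < \<gamma>"
  shows "of_nat (K + 1) + (1 + ennreal (1 / \<gamma>) * ennreal (3/4) ^ (K + 1) * 4) * ennreal (real M + 4)
       = ennreal (real (K + 1) + (1 + 1 / \<gamma> * (3/4) ^ (K + 1) * 4) * (real M + 4))"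
proof -
  define c where "c = 1 / \<gamma> * (3/4) ^ (K + 1) * 4"
  have c: "0 \<le> c" using \<gamma> by (simp add: c_def)
  have "ennreal (3/4) ^ (K + 1) = ennreal ((3/4) ^ (K + 1))"
    by (rule ennreal_power) simp
  moreover have "ennreal (1 / \<gamma>) * ennreal ((3/4) ^ (K + 1)) = ennreal (1 / \<gamma> * (3/4) ^ (K + 1))"
    using \<gamma> by (intro ennreal_mult[symmetric]) simp_all
  moreover have "ennreal (1 / \<gamma> * (3/4) ^ (K + 1)) * 4 = ennreal c"
    using ennreal_mult''[of 4 "1 / \<gamma> * (3/4) ^ (K + 1)"] by (simp add: c_def)
  ultimately have "ennreal (1 / \<gamma>) * ennreal (3/4) ^ (K + 1) * 4 = ennreal c"
    by simp
  moreover have "of_nat (K + 1) + (1 + ennreal c) * ennreal (real M + 4)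
      = ennreal (real (K + 1) + (1 + c) * (real M + 4))"
    using c by (simp add: ennreal_of_nat_eq_real_of_nat ennreal_mult)
  ultimately show ?thesis by (simp add: c_def)
qed

lemma expected_steps_le:
  assumes xs01: "0 \<le> xs" "xs \<le> 1" and r_meas: "r \<in> borel_measurable borel"
    and r_inc: "mono_on {0..xs} r" and r_dec: "antimono_on {xs..1} r"
    and r_xs: "r xs = rmax" and rmax_pos: "0 < rmax"
    and \<gamma>: "0 < \<gamma>" "\<gamma> \<le> 1" and w_pos: "0 < w_width r rmax \<gamma>"
  shows "(\<integral>\<^sup>+w. as_T r xs rmax w \<partial>rand_space)
       \<le> ennreal (2 / ln (4/3) * (ln (1 / w_width r rmax \<gamma>) + 2 * ln (1 / \<gamma>)) + 22)"
proof -
  let ?W = "w_width r rmax \<gamma>"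
  define M N where "M = nat \<lceil>ln (1 / ?W) / ln (4/3)\<rceil>" and "N = nat \<lceil>ln (1 / \<gamma>) / ln (4/3)\<rceil>"
  define K where "K = M + N + 2"
  have W: "0 < ?W" "?W \<le> 1" using w_pos w_width_bounds by auto
  have "(3/4) ^ M \<le> ?W"
    using power_nat_ceiling_log_le[of "3/4" ?W] W by (simp add: M_def)
  then have "(\<Sum>j. miss_prob xs (S_level r rmax \<gamma>) j) \<le> ennreal (real M + 4)"
    by (rule suminf_miss_prob_le[OF xs01 r_inc r_dec w_pos])
  moreover have "(\<integral>\<^sup>+w. as_T r xs rmax w \<partial>rand_space)
      \<le> of_nat (K + 1) + (1 + ennreal (1 / \<gamma>) * ennreal (3/4) ^ (K + 1) * 4)
                           * (\<Sum>j. miss_prob xs (S_level r rmax \<gamma>) j)"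
    by (rule nn_integral_as_T_le[OF xs01 r_meas r_xs rmax_pos \<gamma>])
  ultimately have "(\<integral>\<^sup>+w. as_T r xs rmax w \<partial>rand_space)
      \<le> of_nat (K + 1) + (1 + ennreal (1 / \<gamma>) * ennreal (3/4) ^ (K + 1) * 4) * ennreal (real M + 4)"
    by (meson add_left_mono mult_left_mono order_trans zero_le)
  also have "\<dots> = ennreal (real (K + 1) + (1 + 1 / \<gamma> * (3/4) ^ (K + 1) * 4) * (real M + 4))"
    by (rule ennreal_expected_steps_bound_eq[OF \<gamma>(1)])
  also have "\<dots> \<le> ennreal (2 / ln (4/3) * (ln (1 / ?W) + 2 * ln (1 / \<gamma>)) + 22)"
    using W \<gamma> by (intro ennreal_leI expected_steps_arith) (simp_all add: M_def N_def K_def)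
  finally show ?thesis .
qed

theorem mainTheorem9:
  fixes r :: "real \<Rightarrow> real" and Q :: "real measure" and xs rmax \<gamma> :: real
  assumes r_meas: "r \<in> borel_measurable borel"
    and r_nonneg: "\<forall>x\<in>{0..1}. r x \<ge> 0"
    and Q_dens: "Q = density unifP (\<lambda>x. ennreal (r x))"
    and Q_prob: "prob_space Q"
    and xs_in: "xs \<in> {0..1}"
    and r_inc: "mono_on {0..xs} r"
    and r_dec: "antimono_on {xs..1} r"
    and r_bdd: "bdd_above (r ` {0..1})"
    and rmax_def: "rmax = (SUP x\<in>{0..1}. r x)"
    and r_xs: "r xs = rmax"
    and \<gamma>_in: "\<gamma> \<in> {0..1}"
  shows "(\<integral>\<^sup>+ \<omega>. as_T r xs rmax \<omega> \<partial>rand_space)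
           \<le> ennreal (2 / ln (4/3)) * (log_inv (w_width r rmax \<gamma>) + 2 * log_inv \<gamma>) + 22"
proof (cases "\<gamma> = 0 \<or> w_width r rmax \<gamma> = 0")
  case True
  then show ?thesis by (auto simp: log_inv_def ennreal_mult_top)
next
  case False
  then have \<gamma>: "0 < \<gamma>" "\<gamma> \<le> 1" and W: "0 < w_width r rmax \<gamma>" "w_width r rmax \<gamma> \<le> 1"
    using \<gamma>_in w_width_bounds[of r rmax \<gamma>] by auto
  have xs01: "0 \<le> xs" "xs \<le> 1" using xs_in by auto
  have "r x \<le> rmax" if "x \<in> {0..1}" for x
    unfolding rmax_def using r_bdd that by (intro cSUP_upper)
  then have "0 < rmax"
    by (rule density_bound_pos[OF r_meas Q_prob[unfolded Q_dens]])
  then show ?thesis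
    using expected_steps_le[OF xs01 r_meas r_inc r_dec r_xs _ \<gamma> W(1)] log_inv_bound_eq[OF W \<gamma>]
    by simp
qed

end
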